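(* Let $(a_n)_{n\ge 0}$ be the sequence defined by $a_0=5$, $a_1=13$ and $a_{n+1}=6a_n-a_{n-1}$ for $n\ge 1$, and let $(b_n)_{n\ge 0}$ be the sequence defined by $b_0=5$, $b_1=17$ and $b_{n+1}=6b_n-b_{n-1}$ for $n\ge 1$. Then $$\{z : \exists\, x,y\in\mathbb{N}^{+} \text{ with } x^2+y^2=z^2,\ y=x+7,\ z\in\mathbb{N}^{+},\ \gcd(x,y,z)=1\} \;=\; \{a_n : n\ge 1\}\cup\{b_n : n\ge 1\}.$$
   Context: $\mathbb{N}^{+}$ denotes the set of positive integers. A triple $(x,y,z)$ of positive integers with $x^2+y^2=z^2$ and $\gcd(x,y,z)=1$ is a primitive Pythagorean triple; the left-hand set is the set of largest entries $z$ of primitive Pythagorean triples whose two smaller entries differ by $7$. *)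

theory Defs
  imports Main
begin

fun seqA :: "nat \<Rightarrow> int" where
  "seqA 0 = 5"
| "seqA (Suc 0) = 13"
| "seqA (Suc (Suc n)) = 6 * seqA (Suc n) - seqA n"

fun seqB :: "nat \<Rightarrow> int" where
  "seqB 0 = 5"
| "seqB (Suc 0) = 17"
| "seqB (Suc (Suc n)) = 6 * seqB (Suc n) - seqB n"

end

(* Put u = x + y = 2x + 7. Then x^2 + (x + 7)^2 = z^2 becomes u^2 - 2 z^2 = -49, and since
   gcd (x, x + 7, z) divides 7, primitivity says that 7 does not divide both u and z.
   Multiplication by the unit 3 + 2 sqrt 2, i.e. (u, z) |-> (3u + 4z, 2u + 3z), preserves these
   solutions; its inverse keeps a solution positive and lowers z as long as z >= 15, so every
   solution lies in the forward orbit of one of the two small solutions (1, 5) and (17, 13).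
   Along an orbit z_(n+2) = 6 z_(n+1) - z_n, which produces seqA and seqB; the solution (1, 5)
   itself corresponds to x = -3 and is excluded. *)
theory Submission
  imports Defs "HOL-Computational_Algebra.Primes"
begin

fun pell_aut :: "int \<times> int \<Rightarrow> int \<times> int" where
  "pell_aut (u, z) = (3*u + 4*z, 2*u + 3*z)"

fun pell_aut_inv :: "int \<times> int \<Rightarrow> int \<times> int" where
  "pell_aut_inv (u, z) = (3*u - 4*z, 3*z - 2*u)"

lemma pell_aut_inv_inverse: "pell_aut (pell_aut_inv p) = p"
  by (cases p) simp

lemma pell_aut_inverse: "pell_aut_inv (pell_aut p) = p"
  by (cases p) simp

lemma pell_form_pell_aut:
  "fst (pell_aut p)^2 - 2 * snd (pell_aut p)^2 = fst p^2 - 2 * snd p^2"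
  by (cases p) (simp add: power2_eq_square algebra_simps)

lemma pell_aut_common_divisor:
  "d dvd fst (pell_aut p) \<and> d dvd snd (pell_aut p) \<longleftrightarrow> d dvd fst p \<and> d dvd snd p"
proof
  have "d dvd fst (pell_aut_inv q) \<and> d dvd snd (pell_aut_inv q)"
    if "d dvd fst q \<and> d dvd snd q" for q
    using that by (cases q) auto
  from this[of "pell_aut p"]
  show "d dvd fst (pell_aut p) \<and> d dvd snd (pell_aut p) \<Longrightarrow> d dvd fst p \<and> d dvd snd p"
    by (simp only: pell_aut_inverse)
qed (cases p; auto)

(* Cayley-Hamilton: the matrix of pell_aut has trace 6 and determinant 1. *)
lemma snd_pell_aut_twice: "snd (pell_aut (pell_aut p)) = 6 * snd (pell_aut p) - snd p"
  by (cases p) simp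

lemma snd_funpow_pell_aut_rec:
  "snd ((pell_aut ^^ Suc (Suc n)) p) = 6 * snd ((pell_aut ^^ Suc n) p) - snd ((pell_aut ^^ n) p)"
  by (simp add: snd_pell_aut_twice)

lemma snd_funpow_pell_aut_17_13: "snd ((pell_aut ^^ n) (17, 13)) = seqA (Suc n)"
  by (induction n rule: induct_nat_012) (simp_all only: snd_funpow_pell_aut_rec seqA.simps, simp_all)

lemma snd_funpow_pell_aut_1_5: "snd ((pell_aut ^^ n) (1, 5)) = seqB n"
  by (induction n rule: induct_nat_012) (simp_all only: snd_funpow_pell_aut_rec seqB.simps, simp_all)

(* u plays the role of x + y; the divisibility clause is primitivity of the triple. *)
fun pell_sol :: "int \<times> int \<Rightarrow> bool" where
  "pell_sol (u, z) \<longleftrightarrow> u^2 - 2*z^2 = -49 \<and> 0 < u \<and> 0 < z \<and> \<not> (7 dvd u \<and> 7 dvd z)"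

lemma pell_sol_pell_aut: "pell_sol p \<Longrightarrow> pell_sol (pell_aut p)"
  using pell_form_pell_aut[of p] pell_aut_common_divisor[of 7 p] by (cases p) auto

lemma pell_sol_funpow_pell_aut: "pell_sol p \<Longrightarrow> pell_sol ((pell_aut ^^ n) p)"
  by (induction n) (simp_all add: pell_sol_pell_aut)

lemma fst_funpow_pell_aut_mono: "pell_sol p \<Longrightarrow> fst p \<le> fst ((pell_aut ^^ n) p)"
proof (induction n)
  case (Suc n)
  have "pell_sol ((pell_aut ^^ n) p)"
    using Suc.prems by (rule pell_sol_funpow_pell_aut)
  then have "fst ((pell_aut ^^ n) p) \<le> fst (pell_aut ((pell_aut ^^ n) p))"
    by (cases "(pell_aut ^^ n) p") simp
  then show ?case using Suc by simp
qed simp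

lemma pell_sol_descent:
  assumes sol: "pell_sol (u, z)" and "15 \<le> z"
  shows "pell_sol (pell_aut_inv (u, z))" "snd (pell_aut_inv (u, z)) < z"
proof -
  have eq: "u^2 = 2*z^2 - 49" and "0 < u" using sol by simp_all
  have "225 \<le> z^2" using \<open>15 \<le> z\<close> power_mono[of 15 z 2] by simp
  have "4*z < 3*u" "2*u < 3*z" "z < u"
    by (rule power_less_imp_less_base[where n = 2],
        use eq \<open>225 \<le> z^2\<close> \<open>0 < u\<close> \<open>15 \<le> z\<close> in \<open>simp_all add: power_mult_distrib\<close>)+
  moreover have "(3*u - 4*z)^2 - 2*(3*z - 2*u)^2 = -49"
    using eq by (simp add: power2_eq_square algebra_simps)
  moreover have "\<not> (7 dvd 3*u - 4*z \<and> 7 dvd 3*z - 2*u)"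
    using sol pell_aut_common_divisor[of 7 "pell_aut_inv (u, z)"]
    by (simp add: pell_aut_inv_inverse) blast
  ultimately show "pell_sol (pell_aut_inv (u, z))" "snd (pell_aut_inv (u, z)) < z"
    by simp_all
qed

lemma pell_sol_small:
  assumes sol: "pell_sol (u, z)" and "z < 15"
  shows "(u, z) = (1, 5) \<or> (u, z) = (17, 13)"
proof -
  have eq: "u^2 - 2*z^2 = -49" and "0 < u" "0 < z" using sol by simp_all
  have "z^2 < 15^2" using \<open>0 < z\<close> \<open>z < 15\<close> by (intro power_strict_mono) simp_all
  then have "u^2 < 21^2" using eq by simp
  then have "u < 21" by (rule power_less_imp_less_base) simp
  then have "z \<in> set [1..14]" "u \<in> set [1..20]" using \<open>0 < u\<close> \<open>0 < z\<close> \<open>z < 15\<close> by auto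
  then show ?thesis using eq sol by (simp add: upto.simps) (elim disjE; simp)
qed

lemma pell_sol_iff_orbit:
  "pell_sol p \<longleftrightarrow> (\<exists>n. p = (pell_aut ^^ n) (1, 5) \<or> p = (pell_aut ^^ n) (17, 13))"
proof
  show "pell_sol p \<Longrightarrow> \<exists>n. p = (pell_aut ^^ n) (1, 5) \<or> p = (pell_aut ^^ n) (17, 13)"
  proof (induction p rule: measure_induct_rule[of "\<lambda>p. nat (snd p)"])
    case (less p)
    obtain u z where p: "p = (u, z)" by (cases p)
    show ?case
    proof (cases "z < 15")
      case True
      then show ?thesis using pell_sol_small less.prems p by (metis funpow_0)
    next
      case False
      then have "pell_sol (pell_aut_inv p)" "nat (snd (pell_aut_inv p)) < nat (snd p)"
        using pell_sol_descent less.prems p by auto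
      then obtain n where "pell_aut_inv p = (pell_aut ^^ n) (1, 5) \<or> pell_aut_inv p = (pell_aut ^^ n) (17, 13)"
        using less.IH by blast
      then have "p = (pell_aut ^^ Suc n) (1, 5) \<or> p = (pell_aut ^^ Suc n) (17, 13)"
        by (metis funpow.simps(2) comp_apply pell_aut_inv_inverse)
      then show ?thesis by blast
    qed
  qed
next
  assume "\<exists>n. p = (pell_aut ^^ n) (1, 5) \<or> p = (pell_aut ^^ n) (17, 13)"
  moreover have "pell_sol (1, 5)" "pell_sol (17, 13)"
    by simp_all
  ultimately show "pell_sol p"
    using pell_sol_funpow_pell_aut by blast
qed

lemma pell_sol_gt_7_iff_orbit:
  "7 < u \<and> pell_sol (u, z) \<longleftrightarrow>
     (\<exists>n. (u, z) = (pell_aut ^^ n) (17, 13) \<or> (u, z) = (pell_aut ^^ Suc n) (1, 5))"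
proof
  assume "7 < u \<and> pell_sol (u, z)"
  then obtain n where n: "(u, z) = (pell_aut ^^ n) (1, 5) \<or> (u, z) = (pell_aut ^^ n) (17, 13)"
    and "7 < u"
    unfolding pell_sol_iff_orbit by blast
  show "\<exists>n. (u, z) = (pell_aut ^^ n) (17, 13) \<or> (u, z) = (pell_aut ^^ Suc n) (1, 5)"
  proof (cases n)
    case 0
    with n \<open>7 < u\<close> have "(u, z) = (pell_aut ^^ 0) (17, 13)"
      by (simp only: funpow_0) simp
    then show ?thesis by blast
  next
    case (Suc m)
    then show ?thesis using n by blast
  qed
next
  assume "\<exists>n. (u, z) = (pell_aut ^^ n) (17, 13) \<or> (u, z) = (pell_aut ^^ Suc n) (1, 5)"
  moreover have "(pell_aut ^^ Suc n) (1, 5) = (pell_aut ^^ n) (23, 17)" for n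
    by (simp only: funpow_Suc_right comp_apply) simp
  ultimately obtain p n where p: "p = (17, 13) \<or> p = (23, 17)" and un: "(u, z) = (pell_aut ^^ n) p"
    by metis
  then have "pell_sol p" by auto
  then have "fst p \<le> u" "pell_sol (u, z)"
    using fst_funpow_pell_aut_mono[of p n] pell_sol_funpow_pell_aut[of p n]
    unfolding un[symmetric] by simp_all
  moreover have "7 < fst p" using p by auto
  ultimately show "7 < u \<and> pell_sol (u, z)" by simp
qed

lemma gcd_shift_7_eq_1_iff:
  fixes x z :: int
  shows "gcd (gcd x (x + 7)) z = 1 \<longleftrightarrow> \<not> (7 dvd 2*x + 7 \<and> 7 dvd z)"
proof -
  have "gcd (gcd x (x + 7)) z = gcd 7 (gcd x z)"
    by (simp add: ac_simps)
  also have "\<dots> = 1 \<longleftrightarrow> \<not> 7 dvd gcd x z"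
    using prime_imp_coprime[of "7::int" "gcd x z"] by (auto simp: coprime_iff_gcd_eq_1)
  also have "\<dots> \<longleftrightarrow> \<not> (7 dvd 2*x + 7 \<and> 7 dvd z)"
    by (simp add: gcd_greatest_iff) presburger
  finally show ?thesis .
qed

lemma primitive_triple_iff_pell_sol:
  fixes z :: int
  shows "(\<exists>x y. x > 0 \<and> y > 0 \<and> z > 0 \<and> x^2 + y^2 = z^2 \<and> y = x + 7 \<and> gcd (gcd x y) z = 1)
     \<longleftrightarrow> (\<exists>u. 7 < u \<and> pell_sol (u, z))"
proof -
  have pyth: "x^2 + (x + 7)^2 = z^2 \<longleftrightarrow> (2*x + 7)^2 - 2*z^2 = -49" for x
  proof -
    have "(2*x + 7)^2 - 2*z^2 + 49 = 2 * (x^2 + (x + 7)^2 - z^2)"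
      by (simp add: power2_eq_square algebra_simps)
    then show ?thesis by arith
  qed
  have "(\<exists>x y. x > 0 \<and> y > 0 \<and> z > 0 \<and> x^2 + y^2 = z^2 \<and> y = x + 7 \<and> gcd (gcd x y) z = 1)
     \<longleftrightarrow> (\<exists>x. 0 < x \<and> 0 < z \<and> x^2 + (x + 7)^2 = z^2 \<and> gcd (gcd x (x + 7)) z = 1)"
    by auto
  also have "\<dots> \<longleftrightarrow> (\<exists>x. 0 < x \<and> pell_sol (2*x + 7, z))"
    by (simp only: pyth gcd_shift_7_eq_1_iff pell_sol.simps) auto
  also have "\<dots> \<longleftrightarrow> (\<exists>u. 7 < u \<and> pell_sol (u, z))"
  proof
    assume "\<exists>u. 7 < u \<and> pell_sol (u, z)"
    then obtain u where "7 < u" "pell_sol (u, z)" by blast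
    then have "u^2 = 2 * z^2 - 49" by simp
    then have "odd (u^2)" by simp
    then have "odd u" by simp
    define x where "x = (u - 7) div 2"
    have "u = 2*x + 7" unfolding x_def using \<open>odd u\<close> by presburger
    moreover have "0 < x" using calculation \<open>7 < u\<close> by linarith
    ultimately show "\<exists>x. 0 < x \<and> pell_sol (2*x + 7, z)"
      using \<open>pell_sol (u, z)\<close> by blast
  next
    assume "\<exists>x. 0 < x \<and> pell_sol (2*x + 7, z)"
    then obtain x where "0 < x" "pell_sol (2*x + 7, z)" by blast
    then show "\<exists>u. 7 < u \<and> pell_sol (u, z)"
      by (intro exI[of _ "2*x + 7"] conjI) simp_all
  qed
  finally show ?thesis .
qed

lemma ex_pell_sol_gt_7_iff_seq:
  "(\<exists>u. 7 < u \<and> pell_sol (u, z)) \<longleftrightarrow> (\<exists>n. z = seqA (Suc n) \<or> z = seqB (Suc n))"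
proof -
  have ex_pair: "(\<exists>u. (u, z) = p) \<longleftrightarrow> z = snd p" for p :: "int \<times> int"
    by (cases p) auto
  have "(\<exists>u. 7 < u \<and> pell_sol (u, z)) \<longleftrightarrow>
      (\<exists>n. (\<exists>u. (u, z) = (pell_aut ^^ n) (17, 13)) \<or> (\<exists>u. (u, z) = (pell_aut ^^ Suc n) (1, 5)))"
    using pell_sol_gt_7_iff_orbit by blast
  then show ?thesis
    by (simp only: ex_pair snd_funpow_pell_aut_17_13 snd_funpow_pell_aut_1_5)
qed

theorem mainTheorem1:
  shows "{z :: int. \<exists>x y :: int. x > 0 \<and> y > 0 \<and> z > 0 \<and> x^2 + y^2 = z^2 \<and> y = x + 7
            \<and> gcd (gcd x y) z = 1}
         = {seqA n | n. n \<ge> 1} \<union> {seqB n | n. n \<ge> 1}" (is "?L = ?R")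
proof (rule set_eqI)
  fix z :: int
  have "z \<in> ?R \<longleftrightarrow> (\<exists>n. z = seqA (Suc n) \<or> z = seqB (Suc n))"
    by (auto simp: Suc_le_eq) (metis Suc_pred)+
  then show "z \<in> ?L \<longleftrightarrow> z \<in> ?R"
    by (simp only: mem_Collect_eq primitive_triple_iff_pell_sol ex_pell_sol_gt_7_iff_seq)
qed

end
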